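(* Let $0<p\le\infty$. Equip $\mathcal{L}^p(I)\times\mathcal{L}^p(I)$ with the norm $\|(f,b)\|:=\|f\|_p+\|b\|_p$ if $1\le p\le\infty$, and with the metric $d((f,b),(f',b')):=d_p(f,f')+d_p(b,b')$ if $0<p<1$. Then the fractal convolution operator $\mathcal{P}:\mathcal{L}^p(I)\times\mathcal{L}^p(I)\to\mathcal{L}^p(I)$, $\mathcal{P}(f,b):=f*_T b$, is linear and bounded.
   Context: Let $N\ge 2$, $I=[x_0,x_N]\subset\mathbb{R}$ a nonempty interval and $\Delta: x_0<x_1<\dots<x_N$ a partition of $I$. For $n=1,\dots,N$ let $L_n(x)=a_nx+b_n$ be the affine map with $L_n(x_0)=x_{n-1}$, $L_n(x_N)=x_n$; set $I_1=[x_0,x_1]$ and $I_n=(x_{n-1},x_n]$ for $n=2,\dots,N$. Let $\alpha=(\alpha_1,\dots,\alpha_N)\in(\mathcal{L}^\infty(I))^N$ (scale functions) with $\Lambda:=\operatorname{ess\,sup}\{|\alpha_n(x)|: x\in I,\ n=1,\dots,N\}<1$. For $1\le p\le\infty$, $\mathcal{L}^p(I)$ carries the usual norm $\|\cdot\|_p$; for $0<p<1$ it carries the complete translation-invariant metric $d_p(g,h)=\int_I|g-h|^p\,dx$. For $f,b\in\mathcal{L}^p(I)$ the operator $Tg(x):=f(x)+\alpha_n(L_n^{-1}(x))\,(g-b)(L_n^{-1}(x))$ for $x\in I_n$, $n=1,\dots,N$, is a contraction on $\mathcal{L}^p(I)$ with a unique fixed point, denoted $f*_T b$ and called the fractal convolution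 of the seed function $f$ with the base function $b$. Equivalently, $f*_Tb$ is the unique element of $\mathcal{L}^p(I)$ with $(f*_Tb)(x)=f(x)+\alpha_n(L_n^{-1}(x))\,((f*_Tb)-b)(L_n^{-1}(x))$ for $x\in I_n$, $n=1,\dots,N$. The partition, the maps $L_n$ and $\alpha$ are fixed throughout. *)

theory Defs
  imports "HOL-Analysis.Analysis" "HOL-Probability.Essential_Supremum"
begin

abbreviation Ival :: "nat \<Rightarrow> (nat \<Rightarrow> real) \<Rightarrow> real set" where
  "Ival N xs \<equiv> {xs 0..xs N}"

text \<open>The affine map L_n with L_n(x_0) = x_{n-1}, L_n(x_N) = x_n, and its inverse.\<close>
definition Lmap :: "nat \<Rightarrow> (nat \<Rightarrow> real) \<Rightarrow> nat \<Rightarrow> real \<Rightarrow> real" where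
  "Lmap N xs n t = xs (n - 1) + (xs n - xs (n - 1)) / (xs N - xs 0) * (t - xs 0)"

definition Linv :: "nat \<Rightarrow> (nat \<Rightarrow> real) \<Rightarrow> nat \<Rightarrow> real \<Rightarrow> real" where
  "Linv N xs n y = xs 0 + (xs N - xs 0) / (xs n - xs (n - 1)) * (y - xs (n - 1))"

definition piece :: "(nat \<Rightarrow> real) \<Rightarrow> nat \<Rightarrow> real set" where
  "piece xs n = (if n = 1 then {xs 0..xs 1} else {xs (n - 1)<..xs n})"

text \<open>L^p(I) membership (functions; elements of L^p are their a.e.-classes).
  p = \<infinity> means essentially bounded.\<close>
definition Lp_space :: "ennreal \<Rightarrow> real set \<Rightarrow> (real \<Rightarrow> real) set" where
  "Lp_space p I = {g. g \<in> borel_measurable (lebesgue_on I) \<and>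
     (if p = \<infinity> then (\<exists>B. AE x in lebesgue_on I. \<bar>g x\<bar> \<le> B)
      else integrable (lebesgue_on I) (\<lambda>x. \<bar>g x\<bar> powr enn2real p))}"

text \<open>Lp_size p I g = ||g||_p for 1 <= p <= \<infinity>, and = d_p(g,0) = \<integral>|g|^p for 0 < p < 1.\<close>
definition Lp_size :: "ennreal \<Rightarrow> real set \<Rightarrow> (real \<Rightarrow> real) \<Rightarrow> real" where
  "Lp_size p I g =
     (if p = \<infinity> then real_of_ereal (esssup (lebesgue_on I) (\<lambda>x. ereal \<bar>g x\<bar>))
      else if 1 \<le> p then (\<integral>x. \<bar>g x\<bar> powr enn2real p \<partial>lebesgue_on I) powr (1 / enn2real p)
      else (\<integral>x. \<bar>g x\<bar> powr enn2real p \<partial>lebesgue_on I))"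

definition fcT :: "nat \<Rightarrow> (nat \<Rightarrow> real) \<Rightarrow> (nat \<Rightarrow> real \<Rightarrow> real)
    \<Rightarrow> (real \<Rightarrow> real) \<Rightarrow> (real \<Rightarrow> real) \<Rightarrow> (real \<Rightarrow> real) \<Rightarrow> real \<Rightarrow> real" where
  "fcT N xs \<alpha> f b g y = f y + (\<Sum>n=1..N. indicator (piece xs n) y *
      (\<alpha> n (Linv N xs n y) * (g (Linv N xs n y) - b (Linv N xs n y))))"

text \<open>Fractal convolution f *_T b: the (a.e.-unique) fixed point of T in L^p(I).\<close>
definition frac_conv :: "ennreal \<Rightarrow> nat \<Rightarrow> (nat \<Rightarrow> real) \<Rightarrow> (nat \<Rightarrow> real \<Rightarrow> real)
    \<Rightarrow> (real \<Rightarrow> real) \<Rightarrow> (real \<Rightarrow> real) \<Rightarrow> real \<Rightarrow> real" where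
  "frac_conv p N xs \<alpha> f b = (SOME h. h \<in> Lp_space p (Ival N xs) \<and>
      (AE y in lebesgue_on (Ival N xs). h y = fcT N xs \<alpha> f b h y))"

end

theory Submission
  imports Defs
begin

(* On I_n the operator reads T g = f + beta (g o E) - beta (b o E), where E is L_n^-1 and
   beta = alpha_n o E there. Since L_n^-1 stretches I_n onto I by the factor |I| / |I_n| and the
   reciprocals of these factors sum to 1, E preserves Lebesgue measure on I. The fixed point
   equation h = u + beta (h o E), with u = f - beta (b o E), is therefore solved by the Neumann
   series sum_k (prod_(j<k) beta o E^j) (u o E^k), which converges almost everywhere. For finite p
   an elementary inequality makes the integral of |h|^p contract under the equation (also for
   p < 1), which gives existence, uniqueness and a bound of the integral of |h|^p by those of |f|^p
   and |b|^p; for p = infinity the equation directly gives ||h|| <= (||f|| + ||b||) / (1 - Lambda).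
   Linearity follows from uniqueness, as the difference of the two sides solves the homogeneous
   equation h = beta (h o E). *)

lemma powr_add_le_two_powr:
  fixes x y q :: real
  assumes "0 \<le> x" "0 \<le> y" "0 < q"
  shows "(x + y) powr q \<le> 2 powr q * (x powr q + y powr q)"
proof -
  have "(x + y) powr q \<le> (2 * max x y) powr q"
    using assms by (intro powr_mono2) auto
  also have "\<dots> = 2 powr q * (max x y) powr q"
    using assms by (simp add: powr_mult)
  also have "\<dots> \<le> 2 powr q * (x powr q + y powr q)"
    using assms by (intro mult_left_mono) (auto simp: max_def)
  finally show ?thesis .
qed

text \<open>The coefficient \<open>((1 + L) / 2) powr q < 1\<close> of \<open>z powr q\<close> is what makes the integral
  of \<open>|h| powr q\<close> contract, also for \<open>q < 1\<close> where no triangle inequality is available.\<close>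

lemma powr_add_mult_le_split:
  fixes a z q L :: real
  assumes a: "0 \<le> a" and z: "0 \<le> z" and q: "0 < q" and L: "0 \<le> L" "L < 1"
  shows "(a + L * z) powr q \<le> (1 + 2 / (1 - L)) powr q * a powr q + ((1 + L) / 2) powr q * z powr q"
proof (cases "a \<le> (1 - L) / 2 * z")
  case True
  have "(a + L * z) powr q \<le> ((1 + L) / 2 * z) powr q"
    using True a z L q by (intro powr_mono2) (auto simp: field_simps)
  also have "\<dots> = ((1 + L) / 2) powr q * z powr q"
    by (rule powr_mult; use L z in auto)
  also have "\<dots> \<le> (1 + 2 / (1 - L)) powr q * a powr q + ((1 + L) / 2) powr q * z powr q"
    by simp
  finally show ?thesis .
next
  case False
  then have "z \<le> a * (2 / (1 - L))"
    using L by (simp add: field_simps)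
  moreover have "L * z \<le> z"
    using L z by (intro mult_left_le_one_le) auto
  ultimately have "L * z \<le> a * (2 / (1 - L))"
    by linarith
  then have "(a + L * z) powr q \<le> (a * (1 + 2 / (1 - L))) powr q"
    using a z L q by (intro powr_mono2) (auto simp: field_simps)
  also have "\<dots> = (1 + 2 / (1 - L)) powr q * a powr q"
    using L a by (simp add: powr_mult)
  also have "\<dots> \<le> (1 + 2 / (1 - L)) powr q * a powr q + ((1 + L) / 2) powr q * z powr q"
    by simp
  finally show ?thesis .
qed

lemma ennreal_le_absorb:
  fixes x a :: ennreal and \<theta> :: real
  assumes le: "x \<le> a + ennreal \<theta> * x" and fin: "x < \<infinity>" and \<theta>: "0 \<le> \<theta>" "\<theta> < 1"
  shows "x \<le> ennreal (1 / (1 - \<theta>)) * a"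
proof (cases "a = \<infinity>")
  case True
  then show ?thesis
    using \<theta> by (simp add: ennreal_mult_top)
next
  case False
  obtain r where r: "x = ennreal r" "0 \<le> r"
    using fin by (cases x) auto
  obtain v where v: "a = ennreal v" "0 \<le> v"
    using False by (cases a) auto
  have "0 \<le> \<theta> * r"
    using r \<theta> by simp
  then have "ennreal r \<le> ennreal (v + \<theta> * r)"
    using le r v \<theta> by (simp add: ennreal_mult ennreal_plus)
  then have "r \<le> v + \<theta> * r"
    using \<open>0 \<le> \<theta> * r\<close> v by (subst (asm) ennreal_le_iff) auto
  then have "r * (1 - \<theta>) \<le> v"
    by (simp add: algebra_simps)
  then have "r \<le> 1 / (1 - \<theta>) * v"
    using \<theta> by (simp add: field_simps)
  then show ?thesis
    using r v \<theta> by (simp add: ennreal_mult[symmetric])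
qed

lemma summable_if_SUP_powr_partial_sums_finite:
  fixes g :: "nat \<Rightarrow> real"
  assumes g: "\<And>k. 0 \<le> g k" and q: "0 < q"
    and fin: "(SUP K. ennreal ((\<Sum>k<K. g k) powr q)) < \<infinity>"
  shows "summable g" and "ennreal (suminf g powr q) \<le> (SUP K. ennreal ((\<Sum>k<K. g k) powr q))"
proof -
  define S where "S = enn2real (SUP K. ennreal ((\<Sum>k<K. g k) powr q))"
  have SUP_eq: "(SUP K. ennreal ((\<Sum>k<K. g k) powr q)) = ennreal S"
    unfolding S_def using fin by (simp add: less_top)
  have S: "0 \<le> S"
    unfolding S_def by simp
  have partial_le: "(\<Sum>k<K. g k) \<le> S powr (1 / q)" for K
  proof -
    have "ennreal ((\<Sum>k<K. g k) powr q) \<le> ennreal S"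
      unfolding SUP_eq[symmetric] by (rule SUP_upper) simp
    then have "(\<Sum>k<K. g k) powr q \<le> S"
      using S by (simp add: ennreal_le_iff)
    then have "((\<Sum>k<K. g k) powr q) powr (1 / q) \<le> S powr (1 / q)"
      using q by (intro powr_mono2) auto
    then show ?thesis
      using q g by (simp add: powr_powr sum_nonneg)
  qed
  show sg: "summable g"
  proof (rule bounded_imp_summable)
    show "(\<Sum>k\<le>n. g k) \<le> S powr (1 / q)" for n
      using partial_le[of "Suc n"] by (simp add: lessThan_Suc_atMost)
  qed (rule g)
  have "suminf g \<le> S powr (1 / q)"
    using sg partial_le by (intro suminf_le_const) auto
  then have "suminf g powr q \<le> (S powr (1 / q)) powr q"
    using q g sg by (intro powr_mono2 suminf_nonneg) auto
  also have "\<dots> = S"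
    using q S by (simp add: powr_powr)
  finally show "ennreal (suminf g powr q) \<le> (SUP K. ennreal ((\<Sum>k<K. g k) powr q))"
    unfolding SUP_eq by (rule ennreal_leI)
qed

definition powr_nn_integral :: "'a measure \<Rightarrow> real \<Rightarrow> ('a \<Rightarrow> real) \<Rightarrow> ennreal" where
  "powr_nn_integral M q g = (\<integral>\<^sup>+y. ennreal (\<bar>g y\<bar> powr q) \<partial>M)"

lemma powr_nn_integral_zero [simp]: "0 < q \<Longrightarrow> powr_nn_integral M q (\<lambda>_. 0) = 0"
  unfolding powr_nn_integral_def by simp

lemma powr_nn_integral_le_sum:
  assumes g1: "g1 \<in> borel_measurable M" and g2: "g2 \<in> borel_measurable M"
    and c: "0 \<le> c1" "0 \<le> c2"
    and le: "AE y in M. \<bar>X y\<bar> powr q \<le> c1 * \<bar>g1 y\<bar> powr q + c2 * \<bar>g2 y\<bar> powr q"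
  shows "powr_nn_integral M q X \<le> ennreal c1 * powr_nn_integral M q g1 + ennreal c2 * powr_nn_integral M q g2"
proof -
  have "powr_nn_integral M q X \<le>
      (\<integral>\<^sup>+y. ennreal c1 * ennreal (\<bar>g1 y\<bar> powr q) + ennreal c2 * ennreal (\<bar>g2 y\<bar> powr q) \<partial>M)"
    unfolding powr_nn_integral_def
  proof (rule nn_integral_mono_AE)
    show "AE y in M. ennreal (\<bar>X y\<bar> powr q)
        \<le> ennreal c1 * ennreal (\<bar>g1 y\<bar> powr q) + ennreal c2 * ennreal (\<bar>g2 y\<bar> powr q)"
      using le
    proof eventually_elim
      case (elim y)
      then have "ennreal (\<bar>X y\<bar> powr q) \<le> ennreal (c1 * \<bar>g1 y\<bar> powr q + c2 * \<bar>g2 y\<bar> powr q)"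
        by (rule ennreal_leI)
      then show ?case
        using c by (simp add: ennreal_plus ennreal_mult)
    qed
  qed
  also have "\<dots> = ennreal c1 * powr_nn_integral M q g1 + ennreal c2 * powr_nn_integral M q g2"
    unfolding powr_nn_integral_def using g1 g2 by (simp add: nn_integral_add nn_integral_cmult)
  finally show ?thesis .
qed

lemma ennreal_pos_cases:
  assumes "0 < p"
  obtains "p = \<infinity>" | q where "p = ennreal q" "0 < q"
  using assms by (cases p rule: ennreal_cases) auto

lemma Lp_space_ennreal_iff:
  assumes "0 < q"
  shows "g \<in> Lp_space (ennreal q) I \<longleftrightarrow>
    g \<in> borel_measurable (lebesgue_on I) \<and> powr_nn_integral (lebesgue_on I) q g < \<infinity>"
  using assms by (auto simp: Lp_space_def powr_nn_integral_def integrable_iff_bounded)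

lemma Lp_space_top_iff:
  "g \<in> Lp_space \<infinity> I \<longleftrightarrow> g \<in> borel_measurable (lebesgue_on I) \<and> (\<exists>B. AE x in lebesgue_on I. \<bar>g x\<bar> \<le> B)"
  by (simp add: Lp_space_def)

lemma Lp_size_ennreal:
  assumes q: "0 < q" and g: "g \<in> borel_measurable (lebesgue_on I)"
  shows "Lp_size (ennreal q) I g = (if 1 \<le> q
    then enn2real (powr_nn_integral (lebesgue_on I) q g) powr (1 / q)
    else enn2real (powr_nn_integral (lebesgue_on I) q g))"
proof -
  have "(\<integral>x. \<bar>g x\<bar> powr q \<partial>lebesgue_on I) = enn2real (powr_nn_integral (lebesgue_on I) q g)"
    unfolding powr_nn_integral_def using g by (intro integral_eq_nn_integral) auto
  moreover have "1 \<le> ennreal q \<longleftrightarrow> 1 \<le> q"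
    using q ennreal_le_iff[of q 1] by (simp flip: ennreal_1)
  ultimately show ?thesis
    using q by (simp add: Lp_size_def)
qed

lemma Lp_space_lincomb:
  assumes p: "0 < p" and g1: "g1 \<in> Lp_space p I" and g2: "g2 \<in> Lp_space p I"
  shows "(\<lambda>t. c * g1 t + d * g2 t) \<in> Lp_space p I"
  using p
proof (cases rule: ennreal_pos_cases)
  case 1
  obtain B1 B2 where B: "AE x in lebesgue_on I. \<bar>g1 x\<bar> \<le> B1" "AE x in lebesgue_on I. \<bar>g2 x\<bar> \<le> B2"
    using g1 g2 unfolding 1 Lp_space_top_iff by blast
  have "AE x in lebesgue_on I. \<bar>c * g1 x + d * g2 x\<bar> \<le> \<bar>c\<bar> * B1 + \<bar>d\<bar> * B2"
    using B
  proof eventually_elim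
    case (elim x)
    have "\<bar>c * g1 x + d * g2 x\<bar> \<le> \<bar>c\<bar> * \<bar>g1 x\<bar> + \<bar>d\<bar> * \<bar>g2 x\<bar>"
      by (metis abs_mult abs_triangle_ineq)
    also have "\<dots> \<le> \<bar>c\<bar> * B1 + \<bar>d\<bar> * B2"
      using elim by (intro add_mono mult_left_mono) auto
    finally show ?case .
  qed
  moreover have "g1 \<in> borel_measurable (lebesgue_on I)" "g2 \<in> borel_measurable (lebesgue_on I)"
    using g1 g2 unfolding 1 Lp_space_top_iff by blast+
  then have "(\<lambda>t. c * g1 t + d * g2 t) \<in> borel_measurable (lebesgue_on I)"
    by measurable
  ultimately show ?thesis
    unfolding 1 Lp_space_top_iff by blast
next
  case (2 q)
  have m: "g1 \<in> borel_measurable (lebesgue_on I)" "g2 \<in> borel_measurable (lebesgue_on I)"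
    and fin: "powr_nn_integral (lebesgue_on I) q g1 < \<infinity>" "powr_nn_integral (lebesgue_on I) q g2 < \<infinity>"
    using g1 g2 unfolding 2(1) Lp_space_ennreal_iff[OF \<open>0 < q\<close>] by blast+
  have "AE x in lebesgue_on I. \<bar>c * g1 x + d * g2 x\<bar> powr q
      \<le> (2 powr q * \<bar>c\<bar> powr q) * \<bar>g1 x\<bar> powr q + (2 powr q * \<bar>d\<bar> powr q) * \<bar>g2 x\<bar> powr q"
  proof (intro AE_I2)
    fix x
    have "\<bar>c * g1 x + d * g2 x\<bar> powr q \<le> (\<bar>c * g1 x\<bar> + \<bar>d * g2 x\<bar>) powr q"
      using \<open>0 < q\<close> by (intro powr_mono2 abs_triangle_ineq) auto
    also have "\<dots> \<le> 2 powr q * (\<bar>c * g1 x\<bar> powr q + \<bar>d * g2 x\<bar> powr q)"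
      using \<open>0 < q\<close> by (intro powr_add_le_two_powr) auto
    finally show "\<bar>c * g1 x + d * g2 x\<bar> powr q
      \<le> (2 powr q * \<bar>c\<bar> powr q) * \<bar>g1 x\<bar> powr q + (2 powr q * \<bar>d\<bar> powr q) * \<bar>g2 x\<bar> powr q"
      by (simp add: abs_mult powr_mult algebra_simps)
  qed
  then have "powr_nn_integral (lebesgue_on I) q (\<lambda>t. c * g1 t + d * g2 t)
      \<le> ennreal (2 powr q * \<bar>c\<bar> powr q) * powr_nn_integral (lebesgue_on I) q g1
        + ennreal (2 powr q * \<bar>d\<bar> powr q) * powr_nn_integral (lebesgue_on I) q g2"
    using m by (intro powr_nn_integral_le_sum) auto
  also have "\<dots> < \<infinity>"
    using fin by (simp add: ennreal_mult_less_top)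
  finally have "powr_nn_integral (lebesgue_on I) q (\<lambda>t. c * g1 t + d * g2 t) < \<infinity>" .
  moreover have "(\<lambda>t. c * g1 t + d * g2 t) \<in> borel_measurable (lebesgue_on I)"
    using m by measurable
  ultimately show ?thesis
    unfolding 2(1) Lp_space_ennreal_iff[OF \<open>0 < q\<close>] by blast
qed

lemma Lp_space_top_imp_powr_nn_integral_finite:
  assumes "g \<in> Lp_space \<infinity> {a..b}"
  shows "powr_nn_integral (lebesgue_on {a..b}) 1 g < \<infinity>"
proof -
  obtain B where B: "AE x in lebesgue_on {a..b}. \<bar>g x\<bar> \<le> B"
    using assms Lp_space_top_iff by blast
  have "powr_nn_integral (lebesgue_on {a..b}) 1 g \<le> (\<integral>\<^sup>+x. ennreal B \<partial>lebesgue_on {a..b})"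
    unfolding powr_nn_integral_def using B
    by (intro nn_integral_mono_AE) (auto elim!: eventually_mono intro!: ennreal_leI)
  also have "\<dots> < \<infinity>"
    by (cases "a \<le> b") (simp_all add: emeasure_restrict_space ennreal_mult_less_top)
  finally show ?thesis .
qed

lemma Lp_size_top:
  assumes ab: "a < b" and g: "g \<in> Lp_space \<infinity> {a..b}"
  shows "0 \<le> Lp_size \<infinity> {a..b} g"
    and "AE y in lebesgue_on {a..b}. \<bar>g y\<bar> \<le> Lp_size \<infinity> {a..b} g"
    and "AE y in lebesgue_on {a..b}. \<bar>g y\<bar> \<le> c \<Longrightarrow> Lp_size \<infinity> {a..b} g \<le> c"
proof -
  let ?M = "lebesgue_on {a..b}"
  define e where "e = esssup ?M (\<lambda>x. ereal \<bar>g x\<bar>)"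
  have size_eq: "Lp_size \<infinity> {a..b} g = real_of_ereal e"
    unfolding Lp_size_def e_def by simp
  obtain B where B: "AE x in ?M. \<bar>g x\<bar> \<le> B" and gm: "g \<in> borel_measurable ?M"
    using g Lp_space_top_iff by blast
  have e_le: "e \<le> ereal c" if "AE x in ?M. \<bar>g x\<bar> \<le> c" for c
    unfolding e_def using gm that by (intro esssup_I) (auto elim!: eventually_mono)
  have "esssup ?M (\<lambda>x. ereal 0) = ereal 0"
    using ab by (intro esssup_const) (simp add: emeasure_restrict_space)
  moreover have "esssup ?M (\<lambda>x. ereal 0) \<le> e"
    unfolding e_def by (intro esssup_mono) auto
  ultimately have e0: "0 \<le> e"
    by (simp add: zero_ereal_def)
  then have e_eq: "e = ereal (Lp_size \<infinity> {a..b} g)"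
    using e_le[OF B] size_eq by (cases e) auto
  show "0 \<le> Lp_size \<infinity> {a..b} g"
    using e0 e_eq by simp
  have "AE x in ?M. ereal \<bar>g x\<bar> \<le> e"
    unfolding e_def by (rule esssup_AE)
  then show "AE y in ?M. \<bar>g y\<bar> \<le> Lp_size \<infinity> {a..b} g"
    unfolding e_eq by simp
  show "Lp_size \<infinity> {a..b} g \<le> c" if "AE y in ?M. \<bar>g y\<bar> \<le> c"
    using e_le[OF that] e_eq by simp
qed

locale weighted_composition =
  fixes M :: "'a measure" and E :: "'a \<Rightarrow> 'a" and \<beta> :: "'a \<Rightarrow> real" and \<Lambda> :: real
  assumes E_measurable: "E \<in> M \<rightarrow>\<^sub>M M"
    and distr_E: "distr M M E = M"
    and \<beta>_measurable: "\<beta> \<in> borel_measurable M"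
    and \<beta>_bound: "AE y in M. \<bar>\<beta> y\<bar> \<le> \<Lambda>"
    and \<Lambda>_nonneg: "0 \<le> \<Lambda>" and \<Lambda>_less_1: "\<Lambda> < 1"
begin

lemma AE_comp: "AE x in M. P x \<Longrightarrow> AE y in M. P (E y)"
  by (rule AE_distrD[OF E_measurable]) (simp only: distr_E)

lemma AE_funpow: "AE x in M. P x \<Longrightarrow> AE y in M. P ((E ^^ k) y)"
proof (induction k arbitrary: P)
  case (Suc k)
  then have "AE y in M. P ((E ^^ k) (E y))"
    by (intro AE_comp) blast
  then show ?case
    by (simp only: funpow_Suc_right comp_apply)
qed simp

lemma AE_orbit: "AE x in M. P x \<Longrightarrow> AE y in M. \<forall>k. P ((E ^^ k) y)"
  unfolding AE_all_countable using AE_funpow by blast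

lemma measurable_funpow: "E ^^ k \<in> M \<rightarrow>\<^sub>M M"
  by (rule measurable_compose_n[OF E_measurable])

lemma powr_nn_integral_comp:
  assumes "g \<in> borel_measurable M"
  shows "powr_nn_integral M q (\<lambda>y. g (E y)) = powr_nn_integral M q g"
  unfolding powr_nn_integral_def
  using nn_integral_distr[OF E_measurable, of "\<lambda>y. ennreal (\<bar>g y\<bar> powr q)"] assms
  by (simp add: distr_E)

definition split_const :: "real \<Rightarrow> real" where
  "split_const q = (1 + 2 / (1 - \<Lambda>)) powr q"

definition contraction_ratio :: "real \<Rightarrow> real" where
  "contraction_ratio q = ((1 + \<Lambda>) / 2) powr q"

definition solution_const :: "real \<Rightarrow> real" where
  "solution_const q = split_const q / (1 - contraction_ratio q)"

lemma split_const_pos: "0 < split_const q"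
proof -
  have "0 < 2 / (1 - \<Lambda>)"
    using \<Lambda>_less_1 by simp
  then have "0 < 1 + 2 / (1 - \<Lambda>)"
    by linarith
  then show ?thesis
    unfolding split_const_def by simp
qed

lemma contraction_ratio_nonneg: "0 \<le> contraction_ratio q"
  unfolding contraction_ratio_def by simp

lemma contraction_ratio_less_1: "0 < q \<Longrightarrow> contraction_ratio q < 1"
  unfolding contraction_ratio_def using \<Lambda>_nonneg \<Lambda>_less_1 powr_less_mono2[of q "(1 + \<Lambda>) / 2" 1]
  by simp

lemma solution_const_pos: "0 < q \<Longrightarrow> 0 < solution_const q"
  unfolding solution_const_def using split_const_pos contraction_ratio_less_1 by simp

lemma powr_nn_integral_contraction:
  assumes q: "0 < q" and u: "u \<in> borel_measurable M" and Y: "Y \<in> borel_measurable M"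
    and le: "AE y in M. \<bar>X y\<bar> \<le> \<bar>u y\<bar> + \<Lambda> * \<bar>Y (E y)\<bar>"
  shows "powr_nn_integral M q X
    \<le> ennreal (split_const q) * powr_nn_integral M q u + ennreal (contraction_ratio q) * powr_nn_integral M q Y"
proof -
  have "AE y in M. \<bar>X y\<bar> powr q \<le> split_const q * \<bar>u y\<bar> powr q + contraction_ratio q * \<bar>Y (E y)\<bar> powr q"
    using le
  proof eventually_elim
    case (elim y)
    have "\<bar>X y\<bar> powr q \<le> (\<bar>u y\<bar> + \<Lambda> * \<bar>Y (E y)\<bar>) powr q"
      using elim q by (intro powr_mono2) auto
    also have "\<dots> \<le> split_const q * \<bar>u y\<bar> powr q + contraction_ratio q * \<bar>Y (E y)\<bar> powr q"
      unfolding split_const_def contraction_ratio_def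
      using q \<Lambda>_nonneg \<Lambda>_less_1 by (intro powr_add_mult_le_split) auto
    finally show ?case .
  qed
  then have "powr_nn_integral M q X
      \<le> ennreal (split_const q) * powr_nn_integral M q u + ennreal (contraction_ratio q) * powr_nn_integral M q (\<lambda>y. Y (E y))"
    using u measurable_compose[OF E_measurable Y] split_const_pos contraction_ratio_nonneg
    by (intro powr_nn_integral_le_sum) (auto intro: less_imp_le)
  then show ?thesis
    by (simp only: powr_nn_integral_comp[OF Y])
qed

lemma solution_powr_nn_integral_le:
  assumes q: "0 < q" and h: "h \<in> borel_measurable M" and u: "u \<in> borel_measurable M"
    and fin: "powr_nn_integral M q h < \<infinity>"
    and eq: "AE y in M. h y = u y + \<beta> y * h (E y)"
  shows "powr_nn_integral M q h \<le> ennreal (solution_const q) * powr_nn_integral M q u"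
proof -
  have "AE y in M. \<bar>h y\<bar> \<le> \<bar>u y\<bar> + \<Lambda> * \<bar>h (E y)\<bar>"
    using eq \<beta>_bound
  proof eventually_elim
    case (elim y)
    then have "\<bar>h y\<bar> \<le> \<bar>u y\<bar> + \<bar>\<beta> y\<bar> * \<bar>h (E y)\<bar>"
      by (simp add: abs_mult[symmetric] abs_triangle_ineq)
    also have "\<dots> \<le> \<bar>u y\<bar> + \<Lambda> * \<bar>h (E y)\<bar>"
      using elim by (intro add_left_mono mult_right_mono) auto
    finally show ?case .
  qed
  then have "powr_nn_integral M q h
      \<le> ennreal (split_const q) * powr_nn_integral M q u + ennreal (contraction_ratio q) * powr_nn_integral M q h"
    by (rule powr_nn_integral_contraction[OF q u h])
  then have "powr_nn_integral M q h
      \<le> ennreal (1 / (1 - contraction_ratio q)) * (ennreal (split_const q) * powr_nn_integral M q u)"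
    using fin contraction_ratio_nonneg contraction_ratio_less_1[OF q] by (rule ennreal_le_absorb)
  also have "\<dots> = ennreal (solution_const q) * powr_nn_integral M q u"
  proof -
    have "ennreal (1 / (1 - contraction_ratio q)) * ennreal (split_const q) = ennreal (solution_const q)"
      unfolding solution_const_def using split_const_pos[of q] contraction_ratio_less_1[OF q]
      by (subst ennreal_mult[symmetric]) auto
    then show ?thesis
      by (simp only: mult.assoc[symmetric])
  qed
  finally show ?thesis .
qed

lemma homogeneous_solution_AE_zero:
  assumes q: "0 < q" and w: "w \<in> borel_measurable M" and fin: "powr_nn_integral M q w < \<infinity>"
    and eq: "AE y in M. w y = \<beta> y * w (E y)"
  shows "AE y in M. w y = 0"
proof -
  have "powr_nn_integral M q w \<le> ennreal (solution_const q) * powr_nn_integral M q (\<lambda>_. 0)"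
    using eq by (intro solution_powr_nn_integral_le[OF q w _ fin]) auto
  then have "(\<integral>\<^sup>+y. ennreal (\<bar>w y\<bar> powr q) \<partial>M) = 0"
    using q by (simp add: powr_nn_integral_def)
  then have "AE y in M. ennreal (\<bar>w y\<bar> powr q) = 0"
    using w by (subst (asm) nn_integral_0_iff_AE) auto
  then show ?thesis
    by eventually_elim simp
qed

lemma solution_AE_bound:
  assumes eq: "AE y in M. h y = u y + \<beta> y * h (E y)"
    and u: "AE y in M. \<bar>u y\<bar> \<le> a" and h: "AE y in M. \<bar>h y\<bar> \<le> s"
  shows "AE y in M. \<bar>h y\<bar> \<le> a + \<Lambda> * s"
  using eq u AE_comp[OF h] \<beta>_bound
proof eventually_elim
  case (elim y)
  then have "\<bar>h y\<bar> \<le> \<bar>u y\<bar> + \<bar>\<beta> y\<bar> * \<bar>h (E y)\<bar>"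
    by (simp add: abs_mult[symmetric] abs_triangle_ineq)
  also have "\<dots> \<le> a + \<Lambda> * s"
    using elim \<Lambda>_nonneg by (intro add_mono mult_mono) auto
  finally show ?case .
qed

definition orbit_majorant :: "('a \<Rightarrow> real) \<Rightarrow> nat \<Rightarrow> 'a \<Rightarrow> real" where
  "orbit_majorant u k y = \<Lambda> ^ k * \<bar>u ((E ^^ k) y)\<bar>"

definition neumann_term :: "('a \<Rightarrow> real) \<Rightarrow> nat \<Rightarrow> 'a \<Rightarrow> real" where
  "neumann_term u k y = (\<Prod>j<k. \<beta> ((E ^^ j) y)) * u ((E ^^ k) y)"

definition neumann_series :: "('a \<Rightarrow> real) \<Rightarrow> 'a \<Rightarrow> real" where
  "neumann_series u y = (\<Sum>k. neumann_term u k y)"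

lemma neumann_term_0 [simp]: "neumann_term u 0 y = u y"
  by (simp add: neumann_term_def)

lemma neumann_term_Suc: "neumann_term u (Suc k) y = \<beta> y * neumann_term u k (E y)"
proof -
  have "(\<Prod>j<Suc k. \<beta> ((E ^^ j) y)) = \<beta> y * (\<Prod>j<k. \<beta> ((E ^^ j) (E y)))"
    by (subst prod.lessThan_Suc_shift) (simp only: funpow_Suc_right comp_apply funpow_0)
  then show ?thesis
    unfolding neumann_term_def by (simp only: funpow_Suc_right comp_apply mult.assoc)
qed

lemma abs_neumann_term_le:
  assumes "\<forall>j. \<bar>\<beta> ((E ^^ j) y)\<bar> \<le> \<Lambda>"
  shows "\<bar>neumann_term u k y\<bar> \<le> orbit_majorant u k y"
proof -
  have "\<bar>\<Prod>j<k. \<beta> ((E ^^ j) y)\<bar> \<le> (\<Prod>j<k. \<Lambda>)"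
    unfolding abs_prod using assms by (intro prod_mono) auto
  then show ?thesis
    unfolding neumann_term_def orbit_majorant_def abs_mult by (intro mult_right_mono) auto
qed

lemma neumann_series_eq:
  assumes sum: "summable (\<lambda>k. orbit_majorant u k y)" and \<beta>: "\<forall>j. \<bar>\<beta> ((E ^^ j) y)\<bar> \<le> \<Lambda>"
  shows "neumann_series u y = u y + \<beta> y * neumann_series u (E y)"
    and "\<bar>neumann_series u y\<bar> \<le> (\<Sum>k. orbit_majorant u k y)"
proof -
  have abs_summable: "summable (\<lambda>k. \<bar>neumann_term u k y\<bar>)"
    by (rule summable_comparison_test'[OF sum, where N = 0]) (use abs_neumann_term_le[OF \<beta>] in simp)
  then have summable: "summable (\<lambda>k. neumann_term u k y)"
    by (rule summable_rabs_cancel)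
  show "\<bar>neumann_series u y\<bar> \<le> (\<Sum>k. orbit_majorant u k y)"
    unfolding neumann_series_def
    using summable_rabs[OF abs_summable] suminf_le[OF abs_neumann_term_le[OF \<beta>] abs_summable sum]
    by linarith
  have "neumann_series u y = u y + (\<Sum>k. neumann_term u (Suc k) y)"
    unfolding neumann_series_def using suminf_split_head[OF summable] by simp
  also have "(\<Sum>k. neumann_term u (Suc k) y) = \<beta> y * neumann_series u (E y)"
  proof (cases "\<beta> y = 0")
    case False
    have "summable (\<lambda>k. \<beta> y * neumann_term u k (E y))"
      using summable by (subst (asm) summable_Suc_iff[symmetric]) (simp only: neumann_term_Suc)
    then have "summable (\<lambda>k. neumann_term u k (E y))"
      using False by (simp add: summable_cmult_iff)
    then show ?thesis
      unfolding neumann_series_def neumann_term_Suc by (rule suminf_mult)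
  qed (simp add: neumann_term_Suc)
  finally show "neumann_series u y = u y + \<beta> y * neumann_series u (E y)" .
qed

lemma borel_measurable_neumann_series:
  assumes "u \<in> borel_measurable M"
  shows "neumann_series u \<in> borel_measurable M"
proof -
  have "neumann_term u k \<in> borel_measurable M" for k
    unfolding neumann_term_def[abs_def]
    using measurable_compose[OF measurable_funpow \<beta>_measurable] measurable_compose[OF measurable_funpow assms]
    by (intro borel_measurable_times borel_measurable_prod) auto
  then have "(\<lambda>y. lim (\<lambda>n. \<Sum>k<n. neumann_term u k y)) \<in> borel_measurable M"
    by (intro borel_measurable_lim_metric borel_measurable_sum) auto
  then show ?thesis
    unfolding neumann_series_def[abs_def] by (simp add: suminf_eq_lim)
qed

lemma orbit_majorant_nonneg: "0 \<le> orbit_majorant u k y"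
  unfolding orbit_majorant_def using \<Lambda>_nonneg by simp

lemma orbit_majorant_partial_sum_Suc:
  "(\<Sum>k<Suc K. orbit_majorant u k y) = \<bar>u y\<bar> + \<Lambda> * (\<Sum>k<K. orbit_majorant u k (E y))"
proof -
  have "(\<Sum>k<Suc K. orbit_majorant u k y) = \<bar>u y\<bar> + (\<Sum>k<K. orbit_majorant u (Suc k) y)"
    by (subst sum.lessThan_Suc_shift) (simp add: orbit_majorant_def)
  also have "(\<Sum>k<K. orbit_majorant u (Suc k) y) = (\<Sum>k<K. \<Lambda> * orbit_majorant u k (E y))"
    unfolding orbit_majorant_def by (simp only: funpow_Suc_right comp_apply power_Suc mult.assoc)
  finally show ?thesis
    by (simp add: sum_distrib_left)
qed

lemma powr_nn_integral_orbit_partial_sum_le: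
  assumes q: "0 < q" and u: "u \<in> borel_measurable M" and fin: "powr_nn_integral M q u < \<infinity>"
  shows "powr_nn_integral M q (\<lambda>y. \<Sum>k<K. orbit_majorant u k y)
    \<le> ennreal (solution_const q) * powr_nn_integral M q u"
proof (induction K)
  case (Suc K)
  let ?B = "ennreal (solution_const q) * powr_nn_integral M q u"
  have "(\<lambda>y. \<Sum>k<K. orbit_majorant u k y) \<in> borel_measurable M"
    unfolding orbit_majorant_def using measurable_compose[OF measurable_funpow u] by measurable
  moreover have "AE y in M. \<bar>\<Sum>k<Suc K. orbit_majorant u k y\<bar>
      \<le> \<bar>u y\<bar> + \<Lambda> * \<bar>\<Sum>k<K. orbit_majorant u k (E y)\<bar>"
  proof (intro AE_I2)
    fix y
    have "0 \<le> (\<Sum>k<K. orbit_majorant u k (E y))"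
      using orbit_majorant_nonneg by (simp add: sum_nonneg)
    then show "\<bar>\<Sum>k<Suc K. orbit_majorant u k y\<bar> \<le> \<bar>u y\<bar> + \<Lambda> * \<bar>\<Sum>k<K. orbit_majorant u k (E y)\<bar>"
      unfolding orbit_majorant_partial_sum_Suc using \<Lambda>_nonneg by simp
  qed
  ultimately have "powr_nn_integral M q (\<lambda>y. \<Sum>k<Suc K. orbit_majorant u k y)
      \<le> ennreal (split_const q) * powr_nn_integral M q u
        + ennreal (contraction_ratio q) * powr_nn_integral M q (\<lambda>y. \<Sum>k<K. orbit_majorant u k y)"
    by (rule powr_nn_integral_contraction[OF q u])
  also have "\<dots> \<le> ennreal (split_const q) * powr_nn_integral M q u + ennreal (contraction_ratio q) * ?B"
    using Suc.IH by (intro add_left_mono mult_left_mono) auto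
  also have "\<dots> = ?B"
  proof -
    obtain v where v: "powr_nn_integral M q u = ennreal v" "0 \<le> v"
      using fin by (cases "powr_nn_integral M q u") auto
    have "split_const q * v + contraction_ratio q * (solution_const q * v) = solution_const q * v"
      unfolding solution_const_def using contraction_ratio_less_1[OF q] by (simp add: field_simps)
    then show ?thesis
      using v split_const_pos[of q] contraction_ratio_nonneg[of q] solution_const_pos[OF q]
      by (simp add: ennreal_mult[symmetric] ennreal_plus[symmetric] del: ennreal_plus)
  qed
  finally show ?case .
qed (simp add: q)

lemma nn_integral_SUP_orbit_partial_sums_le:
  assumes q: "0 < q" and u: "u \<in> borel_measurable M" and fin: "powr_nn_integral M q u < \<infinity>"
  shows "(\<integral>\<^sup>+y. (SUP K. ennreal ((\<Sum>k<K. orbit_majorant u k y) powr q)) \<partial>M)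
    \<le> ennreal (solution_const q) * powr_nn_integral M q u"
proof -
  define F where "F K y = ennreal ((\<Sum>k<K. orbit_majorant u k y) powr q)" for K y
  have F_measurable: "F K \<in> borel_measurable M" for K
    unfolding F_def[abs_def] orbit_majorant_def using measurable_compose[OF measurable_funpow u]
    by measurable
  have "incseq F"
    unfolding incseq_def le_fun_def F_def using orbit_majorant_nonneg q
    by (auto intro!: ennreal_leI powr_mono2 sum_mono2 sum_nonneg)
  then have "(\<integral>\<^sup>+y. (SUP K. F K y) \<partial>M) = (SUP K. powr_nn_integral M q (\<lambda>y. \<Sum>k<K. orbit_majorant u k y))"
    using nn_integral_monotone_convergence_SUP[OF _ F_measurable] orbit_majorant_nonneg
    unfolding powr_nn_integral_def F_def by (simp add: sum_nonneg)
  also have "\<dots> \<le> ennreal (solution_const q) * powr_nn_integral M q u"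
    using powr_nn_integral_orbit_partial_sum_le[OF q u fin] by (rule SUP_least)
  finally show ?thesis
    unfolding F_def .
qed

lemma AE_summable_orbit_majorant:
  assumes q: "0 < q" and u: "u \<in> borel_measurable M" and fin: "powr_nn_integral M q u < \<infinity>"
  shows "AE y in M. summable (\<lambda>k. orbit_majorant u k y)"
    and "powr_nn_integral M q (\<lambda>y. \<Sum>k. orbit_majorant u k y)
      \<le> ennreal (solution_const q) * powr_nn_integral M q u"
proof -
  let ?B = "ennreal (solution_const q) * powr_nn_integral M q u"
  let ?S = "\<lambda>y. SUP K. ennreal ((\<Sum>k<K. orbit_majorant u k y) powr q)"
  have "?S \<in> borel_measurable M"
    unfolding orbit_majorant_def using measurable_compose[OF measurable_funpow u] by measurable
  moreover have "integral\<^sup>N M ?S < \<infinity>"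
    using nn_integral_SUP_orbit_partial_sums_le[OF q u fin] fin
    by (auto simp: ennreal_mult_less_top intro: le_less_trans)
  ultimately have "AE y in M. ?S y \<noteq> \<infinity>"
    by (intro nn_integral_PInf_AE) auto
  then have good: "AE y in M. summable (\<lambda>k. orbit_majorant u k y) \<and>
      ennreal ((\<Sum>k. orbit_majorant u k y) powr q) \<le> ?S y"
  proof eventually_elim
    case (elim y)
    then have "?S y < \<infinity>"
      by (metis infinity_ennreal_def less_top)
    then show ?case
      using summable_if_SUP_powr_partial_sums_finite[of "\<lambda>k. orbit_majorant u k y", OF orbit_majorant_nonneg q]
      by blast
  qed
  then show "AE y in M. summable (\<lambda>k. orbit_majorant u k y)"
    by eventually_elim simp
  have "powr_nn_integral M q (\<lambda>y. \<Sum>k. orbit_majorant u k y) \<le> integral\<^sup>N M ?S"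
    unfolding powr_nn_integral_def using good
  proof (intro nn_integral_mono_AE, eventually_elim)
    case (elim y)
    then have "0 \<le> (\<Sum>k. orbit_majorant u k y)"
      using orbit_majorant_nonneg by (simp add: suminf_nonneg)
    then show ?case
      using elim by simp
  qed
  then show "powr_nn_integral M q (\<lambda>y. \<Sum>k. orbit_majorant u k y) \<le> ?B"
    using nn_integral_SUP_orbit_partial_sums_le[OF q u fin] by (rule order.trans)
qed

lemma solution_exists:
  assumes q: "0 < q" and u: "u \<in> borel_measurable M" and fin: "powr_nn_integral M q u < \<infinity>"
  shows "\<exists>h\<in>borel_measurable M. powr_nn_integral M q h < \<infinity> \<and>
    (AE y in M. h y = u y + \<beta> y * h (E y))"
proof (intro bexI conjI)
  have good: "AE y in M. summable (\<lambda>k. orbit_majorant u k y) \<and> (\<forall>j. \<bar>\<beta> ((E ^^ j) y)\<bar> \<le> \<Lambda>)"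
    using AE_summable_orbit_majorant(1)[OF q u fin] AE_orbit[OF \<beta>_bound] by eventually_elim simp
  then show "AE y in M. neumann_series u y = u y + \<beta> y * neumann_series u (E y)"
    by eventually_elim (blast intro: neumann_series_eq(1))
  have "powr_nn_integral M q (neumann_series u) \<le> powr_nn_integral M q (\<lambda>y. \<Sum>k. orbit_majorant u k y)"
    unfolding powr_nn_integral_def using good
  proof (intro nn_integral_mono_AE, eventually_elim)
    case (elim y)
    then have "\<bar>neumann_series u y\<bar> \<le> (\<Sum>k. orbit_majorant u k y)"
      by (blast intro: neumann_series_eq(2))
    then have "\<bar>neumann_series u y\<bar> \<le> \<bar>\<Sum>k. orbit_majorant u k y\<bar>"
      by linarith
    then show ?case
      using q by (intro ennreal_leI powr_mono2) auto
  qed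
  also have "\<dots> < \<infinity>"
    using AE_summable_orbit_majorant(2)[OF q u fin] fin by (auto simp: ennreal_mult_less_top intro: le_less_trans)
  finally show "powr_nn_integral M q (neumann_series u) < \<infinity>" .
qed (rule borel_measurable_neumann_series[OF u])

lemma bounded_solution_exists:
  assumes u: "u \<in> borel_measurable M" and bound: "AE y in M. \<bar>u y\<bar> \<le> C"
  shows "\<exists>h\<in>borel_measurable M. (AE y in M. \<bar>h y\<bar> \<le> C / (1 - \<Lambda>)) \<and>
    (AE y in M. h y = u y + \<beta> y * h (E y))"
proof (intro bexI conjI)
  have geometric: "(\<lambda>k. \<Lambda> ^ k * C) sums (C / (1 - \<Lambda>))"
    using sums_mult2[OF geometric_sums, of \<Lambda> C] \<Lambda>_nonneg \<Lambda>_less_1 by (simp add: field_simps)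
  have majorant_le: "orbit_majorant u k y \<le> \<Lambda> ^ k * C" if "\<forall>k. \<bar>u ((E ^^ k) y)\<bar> \<le> C" for k y
    unfolding orbit_majorant_def using that \<Lambda>_nonneg by (intro mult_left_mono) auto
  have good: "AE y in M. summable (\<lambda>k. orbit_majorant u k y) \<and> (\<Sum>k. orbit_majorant u k y) \<le> C / (1 - \<Lambda>)
      \<and> (\<forall>j. \<bar>\<beta> ((E ^^ j) y)\<bar> \<le> \<Lambda>)"
    using AE_orbit[OF bound] AE_orbit[OF \<beta>_bound]
  proof eventually_elim
    case (elim y)
    have "summable (\<lambda>k. orbit_majorant u k y)"
      using geometric majorant_le[OF elim(1)] \<Lambda>_nonneg
      by (intro summable_comparison_test'[where N = 0, OF sums_summable]) (auto simp: orbit_majorant_def)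
    moreover have "(\<Sum>k. orbit_majorant u k y) \<le> C / (1 - \<Lambda>)"
      using geometric majorant_le[OF elim(1)] calculation
      by (metis sums_iff suminf_le)
    ultimately show ?case
      using elim(2) by blast
  qed
  then show "AE y in M. neumann_series u y = u y + \<beta> y * neumann_series u (E y)"
    by eventually_elim (blast intro: neumann_series_eq(1))
  show "AE y in M. \<bar>neumann_series u y\<bar> \<le> C / (1 - \<Lambda>)"
    using good by eventually_elim (blast intro: order.trans[OF neumann_series_eq(2)])
qed (rule borel_measurable_neumann_series[OF u])

end

locale interval_partition =
  fixes N :: nat and xs :: "nat \<Rightarrow> real"
  assumes N_pos: "0 < N" and xs_Suc: "\<And>n. n < N \<Longrightarrow> xs n < xs (Suc n)"
begin

abbreviation "I \<equiv> {xs 0..xs N}"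
abbreviation "M \<equiv> lebesgue_on I"

lemma xs_less: "i < j \<Longrightarrow> j \<le> N \<Longrightarrow> xs i < xs j"
  using xs_Suc by (rule lift_Suc_mono_less_ivl[where N = "{..<N}"]) auto

lemma xs_le: "i \<le> j \<Longrightarrow> j \<le> N \<Longrightarrow> xs i \<le> xs j"
  using xs_less[of i j] by (cases "i = j") auto

lemma piece_subset: "n \<in> {1..N} \<Longrightarrow> piece xs n \<subseteq> {xs (n - 1)..xs n}"
  by (auto simp: piece_def)

lemma piece_subset_I: "n \<in> {1..N} \<Longrightarrow> piece xs n \<subseteq> I"
proof -
  assume n: "n \<in> {1..N}"
  then have "xs 0 \<le> xs (n - 1)" "xs n \<le> xs N"
    by (auto intro: xs_le)
  then show ?thesis
    using piece_subset[OF n] by auto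
qed

lemma piece_disjoint:
  assumes n: "n \<in> {1..N}" and m: "m \<in> {1..N}" and "y \<in> piece xs n" "y \<in> piece xs m"
  shows "n = m"
proof -
  have False if "i \<in> {1..N}" "j \<in> {1..N}" "i < j" "y \<in> piece xs i" "y \<in> piece xs j" for i j
  proof -
    have "y \<le> xs i"
      using piece_subset[OF that(1)] that(4) by auto
    also have "xs i \<le> xs (j - 1)"
      using that by (intro xs_le) auto
    also have "xs (j - 1) < y"
      using that(1,3,5) by (auto simp: piece_def)
    finally show False
      by simp
  qed
  then show ?thesis
    using assms by (metis linorder_neqE_nat)
qed

lemma piece_cover:
  assumes y: "y \<in> I"
  obtains n where "n \<in> {1..N}" "y \<in> piece xs n"
proof (cases "y \<le> xs 1")
  case True
  then show ?thesis
    using y N_pos that[of 1] by (auto simp: piece_def)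
next
  case False
  define m where "m = (LEAST m. y \<le> xs m)"
  have "y \<le> xs N"
    using y by simp
  then have m_le: "y \<le> xs m" "m \<le> N"
    unfolding m_def by (rule LeastI, rule Least_le)
  have "xs 0 < xs 1"
    using xs_less[of 0 1] N_pos by simp
  then have "m \<ge> 2"
    using m_le(1) False y by (cases m; cases "m - 1") auto
  moreover have "\<not> y \<le> xs (m - 1)"
    using \<open>m \<ge> 2\<close> not_less_Least[of "m - 1" "\<lambda>m. y \<le> xs m"] unfolding m_def by auto
  ultimately have "y \<in> piece xs m"
    using m_le by (simp add: piece_def)
  moreover have "m \<in> {1..N}"
    using m_le \<open>m \<ge> 2\<close> by simp
  ultimately show ?thesis
    using that by blast
qed

lemma sum_indicator_piece:
  assumes "m \<in> {1..N}" "y \<in> piece xs m"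
  shows "(\<Sum>n=1..N. indicator (piece xs n) y * F n) = (F m :: real)"
proof -
  have "(\<Sum>n=1..N. indicator (piece xs n) y * F n) = (\<Sum>n=1..N. if n = m then F n else 0)"
  proof (intro sum.cong refl)
    fix n
    assume "n \<in> {1..N}"
    then have "y \<in> piece xs n \<longleftrightarrow> n = m"
      using assms piece_disjoint by blast
    then show "indicator (piece xs n) y * F n = (if n = m then F n else 0)"
      by (simp add: indicator_def)
  qed
  then show ?thesis
    using assms by (simp add: sum.delta)
qed

definition Linv_slope :: "nat \<Rightarrow> real" where
  "Linv_slope n = (xs N - xs 0) / (xs n - xs (n - 1))"

text \<open>The map \<open>E\<close>, equal to \<open>L\<^sub>n\<^sup>-\<^sup>1\<close> on \<open>I\<^sub>n\<close>; outside \<open>I\<close> it is \<open>0\<close>.\<close>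

definition Linv_pw :: "real \<Rightarrow> real" where
  "Linv_pw y = (\<Sum>n=1..N. indicator (piece xs n) y * Linv N xs n y)"

lemma Linv_slope_pos: "n \<in> {1..N} \<Longrightarrow> 0 < Linv_slope n"
  unfolding Linv_slope_def using xs_less[of 0 N] xs_less[of "n - 1" n] N_pos by auto

lemma Linv_eq: "Linv N xs n y = xs 0 + Linv_slope n * (y - xs (n - 1))"
  unfolding Linv_def Linv_slope_def by simp

lemma Linv_affine: "Linv N xs n = (\<lambda>y. (xs 0 - Linv_slope n * xs (n - 1)) + Linv_slope n * y)"
  unfolding fun_eq_iff Linv_eq by (simp add: algebra_simps)

lemma Linv_pw_piece: "m \<in> {1..N} \<Longrightarrow> y \<in> piece xs m \<Longrightarrow> Linv_pw y = Linv N xs m y"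
  unfolding Linv_pw_def by (rule sum_indicator_piece)

lemma Linv_measurable: "n \<in> {1..N} \<Longrightarrow> Linv N xs n \<in> lebesgue \<rightarrow>\<^sub>M lebesgue"
  unfolding Linv_affine using Linv_slope_pos[of n]
    lebesgue_affine_measurable[where c = "\<lambda>_. Linv_slope n" and t = "xs 0 - Linv_slope n * xs (n - 1)"]
  by simp

lemma Linv_vimage_I:
  assumes n: "n \<in> {1..N}"
  shows "Linv N xs n -` I = {xs (n - 1)..xs n}"
proof -
  have c: "0 < Linv_slope n"
    using Linv_slope_pos[OF n] .
  have "Linv_slope n * (xs n - xs (n - 1)) = xs N - xs 0"
    unfolding Linv_slope_def using xs_less[of "n - 1" n] n by auto
  then have "Linv N xs n y \<le> xs N \<longleftrightarrow> Linv_slope n * (y - xs (n - 1)) \<le> Linv_slope n * (xs n - xs (n - 1))" for y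
    unfolding Linv_eq by linarith
  moreover have "xs 0 \<le> Linv N xs n y \<longleftrightarrow> xs (n - 1) \<le> y" for y
    unfolding Linv_eq using c by (simp add: zero_le_mult_iff)
  ultimately show ?thesis
    using c by auto
qed

lemma emeasure_Linv_vimage:
  assumes n: "n \<in> {1..N}" and S: "S \<in> sets lebesgue"
  shows "emeasure lebesgue (Linv N xs n -` S) = ennreal (1 / Linv_slope n) * emeasure lebesgue S"
proof -
  let ?c = "Linv_slope n" and ?t = "xs 0 - Linv_slope n * xs (n - 1)"
  have c: "0 < ?c"
    using Linv_slope_pos[OF n] .
  have "emeasure lebesgue S = ennreal ?c * (\<integral>\<^sup>+x. indicator S (?t + ?c * x) \<partial>lebesgue)"
    using c S nn_integral_real_affine_lebesgue[of "indicator S" ?c ?t] by simp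
  also have "(\<lambda>x. indicator S (?t + ?c * x) :: ennreal) = indicator (Linv N xs n -` S)"
    unfolding Linv_affine by (auto simp: fun_eq_iff indicator_def)
  finally have "emeasure lebesgue S = ennreal ?c * emeasure lebesgue (Linv N xs n -` S)"
    using measurable_sets[OF Linv_measurable[OF n] S] by simp
  then show ?thesis
    using c by (simp add: mult.assoc[symmetric] ennreal_mult[symmetric])
qed

lemma piece_sets [measurable]: "piece xs n \<in> sets lebesgue"
  unfolding piece_def by simp

lemma emeasure_piece_Linv_vimage:
  assumes n: "n \<in> {1..N}" and S: "S \<in> sets M"
  shows "emeasure lebesgue (piece xs n \<inter> Linv N xs n -` S) = ennreal (1 / Linv_slope n) * emeasure lebesgue S"
proof -
  let ?V = "Linv N xs n -` S"
  have SI: "S \<subseteq> I" "S \<in> sets lebesgue"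
    using S by (auto simp: sets_restrict_space_iff)
  have V: "?V \<in> sets lebesgue"
    using measurable_sets[OF Linv_measurable[OF n] SI(2)] by simp
  have "?V \<subseteq> {xs (n - 1)..xs n}"
    using Linv_vimage_I[OF n] SI(1) by blast
  then have "?V - {xs (n - 1)} \<subseteq> piece xs n \<inter> ?V"
    by (auto simp: piece_def)
  then have "emeasure lebesgue (?V - {xs (n - 1)}) \<le> emeasure lebesgue (piece xs n \<inter> ?V)"
    using V by (intro emeasure_mono) auto
  moreover have "emeasure lebesgue (?V - {xs (n - 1)}) = emeasure lebesgue ?V"
    using V by (intro emeasure_Diff_null_set) (auto intro: null_sets_completionI countable_imp_null_set_lborel)
  moreover have "emeasure lebesgue (piece xs n \<inter> ?V) \<le> emeasure lebesgue ?V"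
    using V by (intro emeasure_mono) auto
  ultimately have "emeasure lebesgue (piece xs n \<inter> ?V) = emeasure lebesgue ?V"
    by simp
  then show ?thesis
    using emeasure_Linv_vimage[OF n SI(2)] by simp
qed

lemma Linv_pw_vimage: "Linv_pw -` S \<inter> I = (\<Union>n\<in>{1..N}. piece xs n \<inter> Linv N xs n -` S)"
proof (intro equalityI subsetI)
  fix y
  assume y: "y \<in> Linv_pw -` S \<inter> I"
  then obtain m where "m \<in> {1..N}" "y \<in> piece xs m"
    using piece_cover by blast
  then show "y \<in> (\<Union>n\<in>{1..N}. piece xs n \<inter> Linv N xs n -` S)"
    using Linv_pw_piece y by auto
next
  fix y
  assume "y \<in> (\<Union>n\<in>{1..N}. piece xs n \<inter> Linv N xs n -` S)"
  then obtain n where n: "n \<in> {1..N}" "y \<in> piece xs n" and "Linv N xs n y \<in> S"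
    by blast
  then have "Linv_pw y \<in> S"
    using Linv_pw_piece[OF n] by simp
  moreover have "y \<in> I"
    using piece_subset_I[OF n(1)] n(2) by blast
  ultimately show "y \<in> Linv_pw -` S \<inter> I"
    by simp
qed

lemma Linv_pw_in_I:
  assumes "y \<in> I"
  shows "Linv_pw y \<in> I"
proof -
  obtain n where n: "n \<in> {1..N}" "y \<in> piece xs n"
    using piece_cover[OF assms] .
  then have "y \<in> Linv N xs n -` I"
    unfolding Linv_vimage_I[OF n(1)] using piece_subset by blast
  then show ?thesis
    using Linv_pw_piece[OF n] by simp
qed

lemma Linv_pw_measurable: "Linv_pw \<in> M \<rightarrow>\<^sub>M M"
proof (rule measurableI)
  fix A
  assume "A \<in> sets M"
  then have "A \<in> sets lebesgue"
    by (simp add: sets_restrict_space_iff)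
  then have "(\<Union>n\<in>{1..N}. piece xs n \<inter> Linv N xs n -` A) \<in> sets lebesgue"
    using measurable_sets[OF Linv_measurable] by (intro sets.finite_UN sets.Int) auto
  then show "Linv_pw -` A \<inter> space M \<in> sets M"
    unfolding space_restrict_space Linv_pw_vimage[symmetric] by (simp add: sets_restrict_space_iff)
next
  fix x
  assume "x \<in> space M"
  then have "x \<in> I"
    by simp
  then show "Linv_pw x \<in> space M"
    using Linv_pw_in_I[OF \<open>x \<in> I\<close>] by simp
qed

lemma sum_inverse_Linv_slope: "(\<Sum>n=1..N. 1 / Linv_slope n) = 1"
proof -
  have "(\<Sum>n=1..N. 1 / Linv_slope n) = (\<Sum>n=0..N - 1. xs (Suc n) - xs n) / (xs N - xs 0)"
    unfolding Linv_slope_def sum_divide_distrib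
    using N_pos by (intro sum.reindex_bij_witness[where i = Suc and j = "\<lambda>n. n - 1"]) auto
  also have "\<dots> = 1"
    using sum_Suc_diff[of 0 "N - 1" xs] N_pos xs_less[of 0 N] by simp
  finally show ?thesis .
qed

lemma distr_Linv_pw: "distr M M Linv_pw = M"
proof (rule measure_eqI)
  fix A
  assume "A \<in> sets (distr M M Linv_pw)"
  then have A: "A \<in> sets M" "A \<in> sets lebesgue"
    by (auto simp: sets_restrict_space_iff)
  have "emeasure (distr M M Linv_pw) A = emeasure lebesgue (Linv_pw -` A \<inter> I)"
    using A Linv_pw_measurable by (simp add: emeasure_distr emeasure_restrict_space)
  also have "\<dots> = (\<Sum>n\<in>{1..N}. emeasure lebesgue (piece xs n \<inter> Linv N xs n -` A))"
    unfolding Linv_pw_vimage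
  proof (rule sum_emeasure[symmetric])
    show "(\<lambda>n. piece xs n \<inter> Linv N xs n -` A) ` {1..N} \<subseteq> sets lebesgue"
      using measurable_sets[OF Linv_measurable A(2)] by auto
    show "disjoint_family_on (\<lambda>n. piece xs n \<inter> Linv N xs n -` A) {1..N}"
      unfolding disjoint_family_on_def using piece_disjoint by blast
  qed simp
  also have "\<dots> = (\<Sum>n\<in>{1..N}. ennreal (1 / Linv_slope n) * emeasure lebesgue A)"
    using emeasure_piece_Linv_vimage A(1) by simp
  also have "\<dots> = ennreal (\<Sum>n\<in>{1..N}. 1 / Linv_slope n) * emeasure lebesgue A"
    using Linv_slope_pos by (subst sum_ennreal[symmetric]) (auto simp: sum_distrib_right less_imp_le)
  also have "\<dots> = emeasure M A"
    unfolding sum_inverse_Linv_slope using A by (simp add: emeasure_restrict_space sets_restrict_space_iff)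
  finally show "emeasure (distr M M Linv_pw) A = emeasure M A" .
qed simp

end

locale fractal_convolution = interval_partition +
  fixes \<alpha> :: "nat \<Rightarrow> real \<Rightarrow> real" and \<Lambda> :: real
  assumes \<alpha>_measurable: "\<And>n. n \<in> {1..N} \<Longrightarrow> \<alpha> n \<in> borel_measurable M"
    and \<alpha>_bound: "\<And>n. n \<in> {1..N} \<Longrightarrow> AE t in M. \<bar>\<alpha> n t\<bar> \<le> \<Lambda>"
    and \<Lambda>_bounds: "0 \<le> \<Lambda>" "\<Lambda> < 1"
begin

definition \<beta> :: "real \<Rightarrow> real" where
  "\<beta> y = (\<Sum>n=1..N. indicator (piece xs n) y * \<alpha> n (Linv_pw y))"

definition source :: "(real \<Rightarrow> real) \<Rightarrow> (real \<Rightarrow> real) \<Rightarrow> real \<Rightarrow> real" where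
  "source f b y = f y - \<beta> y * b (Linv_pw y)"

lemma fcT_eq_source: "fcT N xs \<alpha> f b h y = source f b y + \<beta> y * h (Linv_pw y)"
proof (cases "\<exists>m\<in>{1..N}. y \<in> piece xs m")
  case True
  then obtain m where m: "m \<in> {1..N}" "y \<in> piece xs m"
    by blast
  then have "\<beta> y = \<alpha> m (Linv_pw y)"
    unfolding \<beta>_def by (rule sum_indicator_piece)
  then show ?thesis
    unfolding fcT_def source_def sum_indicator_piece[OF m] Linv_pw_piece[OF m]
    by (simp add: algebra_simps)
next
  case False
  then have "indicator (piece xs n) y = (0::real)" if "n \<in> {1..N}" for n
    using that by auto
  then show ?thesis
    unfolding fcT_def source_def \<beta>_def by simp
qed

lemma \<beta>_measurable: "\<beta> \<in> borel_measurable M"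
proof -
  have "indicator (piece xs n) \<in> borel_measurable M" for n
    by (intro measurable_restrict_space1 borel_measurable_indicator) simp
  moreover have "(\<lambda>y. \<alpha> n (Linv_pw y)) \<in> borel_measurable M" if "n \<in> {1..N}" for n
    using measurable_compose[OF Linv_pw_measurable \<alpha>_measurable[OF that]] .
  ultimately show ?thesis
    unfolding \<beta>_def[abs_def] by (intro borel_measurable_sum borel_measurable_times) auto
qed

lemma \<beta>_bound: "AE y in M. \<bar>\<beta> y\<bar> \<le> \<Lambda>"
proof -
  have "AE t in M. \<forall>n\<in>{1..N}. \<bar>\<alpha> n t\<bar> \<le> \<Lambda>"
    using \<alpha>_bound by (intro AE_finite_allI) auto
  then have "AE y in M. \<forall>n\<in>{1..N}. \<bar>\<alpha> n (Linv_pw y)\<bar> \<le> \<Lambda>"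
    by (intro AE_distrD[OF Linv_pw_measurable]) (simp only: distr_Linv_pw)
  then show ?thesis
  proof (rule AE_mp[OF _ AE_I2], intro impI)
    fix y
    assume "y \<in> space M" and bound: "\<forall>n\<in>{1..N}. \<bar>\<alpha> n (Linv_pw y)\<bar> \<le> \<Lambda>"
    then obtain m where m: "m \<in> {1..N}" "y \<in> piece xs m"
      using piece_cover by auto
    then show "\<bar>\<beta> y\<bar> \<le> \<Lambda>"
      unfolding \<beta>_def sum_indicator_piece[OF m] using bound by simp
  qed
qed

sublocale weighted_composition M Linv_pw \<beta> \<Lambda>
  using Linv_pw_measurable distr_Linv_pw \<beta>_measurable \<beta>_bound \<Lambda>_bounds by unfold_locales

lemma source_measurable:
  assumes "f \<in> borel_measurable M" and "b \<in> borel_measurable M"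
  shows "source f b \<in> borel_measurable M"
  unfolding source_def[abs_def]
  using assms \<beta>_measurable measurable_compose[OF Linv_pw_measurable assms(2)] by measurable

lemma powr_nn_integral_source_le:
  assumes q: "0 < q" and f: "f \<in> borel_measurable M" and b: "b \<in> borel_measurable M"
  shows "powr_nn_integral M q (source f b) \<le> ennreal (2 powr q) * (powr_nn_integral M q f + powr_nn_integral M q b)"
proof -
  have "AE y in M. \<bar>source f b y\<bar> powr q \<le> 2 powr q * \<bar>f y\<bar> powr q + 2 powr q * \<bar>b (Linv_pw y)\<bar> powr q"
    using \<beta>_bound
  proof eventually_elim
    case (elim y)
    have "\<bar>source f b y\<bar> \<le> \<bar>f y\<bar> + \<bar>\<beta> y\<bar> * \<bar>b (Linv_pw y)\<bar>"
      unfolding source_def by (metis abs_mult abs_triangle_ineq4)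
    also have "\<dots> \<le> \<bar>f y\<bar> + \<bar>b (Linv_pw y)\<bar>"
      using elim \<Lambda>_less_1 by (intro add_left_mono mult_left_le_one_le) auto
    finally have "\<bar>source f b y\<bar> powr q \<le> (\<bar>f y\<bar> + \<bar>b (Linv_pw y)\<bar>) powr q"
      using q by (intro powr_mono2) auto
    also have "\<dots> \<le> 2 powr q * (\<bar>f y\<bar> powr q + \<bar>b (Linv_pw y)\<bar> powr q)"
      using q by (intro powr_add_le_two_powr) auto
    finally show ?case
      by (simp add: algebra_simps)
  qed
  then have "powr_nn_integral M q (source f b)
      \<le> ennreal (2 powr q) * powr_nn_integral M q f + ennreal (2 powr q) * powr_nn_integral M q (\<lambda>y. b (Linv_pw y))"
    using f measurable_compose[OF Linv_pw_measurable b] by (intro powr_nn_integral_le_sum) auto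
  then show ?thesis
    by (simp add: powr_nn_integral_comp[OF b] distrib_left)
qed

lemma AE_abs_source_le:
  assumes "AE y in M. \<bar>f y\<bar> \<le> a" and "AE y in M. \<bar>b y\<bar> \<le> c"
  shows "AE y in M. \<bar>source f b y\<bar> \<le> a + c"
  using assms(1) AE_comp[OF assms(2)] \<beta>_bound
proof eventually_elim
  case (elim y)
  have "\<bar>source f b y\<bar> \<le> \<bar>f y\<bar> + \<bar>\<beta> y\<bar> * \<bar>b (Linv_pw y)\<bar>"
    unfolding source_def by (metis abs_mult abs_triangle_ineq4)
  also have "\<dots> \<le> a + 1 * c"
    using elim \<Lambda>_less_1 by (intro add_mono mult_mono) auto
  finally show ?case
    by simp
qed

lemma Lp_fixpoint_exists:
  assumes p: "0 < p" and f: "f \<in> Lp_space p I" and b: "b \<in> Lp_space p I"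
  shows "\<exists>h. h \<in> Lp_space p I \<and> (AE y in M. h y = fcT N xs \<alpha> f b h y)"
  using p
proof (cases rule: ennreal_pos_cases)
  case 1
  obtain a c where bounds: "AE y in M. \<bar>f y\<bar> \<le> a" "AE y in M. \<bar>b y\<bar> \<le> c"
    and m: "f \<in> borel_measurable M" "b \<in> borel_measurable M"
    using f b unfolding 1 Lp_space_top_iff by blast
  have "AE y in M. \<bar>source f b y\<bar> \<le> a + c"
    using bounds by (rule AE_abs_source_le)
  then obtain h where "h \<in> borel_measurable M" "AE y in M. \<bar>h y\<bar> \<le> (a + c) / (1 - \<Lambda>)"
    and eq: "AE y in M. h y = source f b y + \<beta> y * h (Linv_pw y)"
    using bounded_solution_exists[OF source_measurable[OF m]] by blast
  then have "h \<in> Lp_space p I"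
    unfolding 1 Lp_space_top_iff by blast
  with eq show ?thesis
    unfolding fcT_eq_source by (intro exI[of _ h] conjI)
next
  case (2 q)
  have m: "f \<in> borel_measurable M" "b \<in> borel_measurable M"
    and "powr_nn_integral M q f < \<infinity>" "powr_nn_integral M q b < \<infinity>"
    using f b unfolding 2(1) Lp_space_ennreal_iff[OF \<open>0 < q\<close>] by blast+
  then have "powr_nn_integral M q (source f b) < \<infinity>"
    using powr_nn_integral_source_le[OF \<open>0 < q\<close> m]
    by (auto simp: ennreal_mult_less_top intro: le_less_trans)
  then obtain h where "h \<in> borel_measurable M" "powr_nn_integral M q h < \<infinity>"
    and eq: "AE y in M. h y = source f b y + \<beta> y * h (Linv_pw y)"
    using solution_exists[OF \<open>0 < q\<close> source_measurable[OF m]] by blast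
  then have "h \<in> Lp_space p I"
    unfolding 2(1) Lp_space_ennreal_iff[OF \<open>0 < q\<close>] by blast
  with eq show ?thesis
    unfolding fcT_eq_source by (intro exI[of _ h] conjI)
qed

lemma frac_conv_fixpoint:
  assumes p: "0 < p" and f: "f \<in> Lp_space p I" and b: "b \<in> Lp_space p I"
  shows "frac_conv p N xs \<alpha> f b \<in> Lp_space p I"
    and "AE y in M. frac_conv p N xs \<alpha> f b y = fcT N xs \<alpha> f b (frac_conv p N xs \<alpha> f b) y"
proof -
  have "frac_conv p N xs \<alpha> f b \<in> Lp_space p I \<and>
      (AE y in M. frac_conv p N xs \<alpha> f b y = fcT N xs \<alpha> f b (frac_conv p N xs \<alpha> f b) y)"
    unfolding frac_conv_def using Lp_fixpoint_exists[OF p f b] by (rule someI_ex)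
  then show "frac_conv p N xs \<alpha> f b \<in> Lp_space p I"
    and "AE y in M. frac_conv p N xs \<alpha> f b y = fcT N xs \<alpha> f b (frac_conv p N xs \<alpha> f b) y"
    by blast+
qed

lemma Lp_homogeneous_solution_AE_zero:
  assumes p: "0 < p" and w: "w \<in> Lp_space p I" and eq: "AE y in M. w y = \<beta> y * w (Linv_pw y)"
  shows "AE y in M. w y = 0"
  using p
proof (cases rule: ennreal_pos_cases)
  case 1
  then have "w \<in> borel_measurable M" "powr_nn_integral M 1 w < \<infinity>"
    using w Lp_space_top_iff Lp_space_top_imp_powr_nn_integral_finite by blast+
  then show ?thesis
    by (rule homogeneous_solution_AE_zero[OF zero_less_one _ _ eq])
next
  case (2 q)
  then have "w \<in> borel_measurable M" "powr_nn_integral M q w < \<infinity>"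
    using w Lp_space_ennreal_iff by blast+
  then show ?thesis
    by (rule homogeneous_solution_AE_zero[OF \<open>0 < q\<close> _ _ eq])
qed

lemma frac_conv_linear:
  assumes p: "0 < p" and f: "f \<in> Lp_space p I" and b: "b \<in> Lp_space p I"
    and f': "f' \<in> Lp_space p I" and b': "b' \<in> Lp_space p I"
  shows "AE y in M. frac_conv p N xs \<alpha> (\<lambda>t. c * f t + d * f' t) (\<lambda>t. c * b t + d * b' t) y
    = c * frac_conv p N xs \<alpha> f b y + d * frac_conv p N xs \<alpha> f' b' y"
proof -
  define F B where "F = (\<lambda>t. c * f t + d * f' t)" and "B = (\<lambda>t. c * b t + d * b' t)"
  define h h' H where "h = frac_conv p N xs \<alpha> f b" and "h' = frac_conv p N xs \<alpha> f' b'"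
    and "H = frac_conv p N xs \<alpha> F B"
  define w where "w = (\<lambda>t. 1 * H t + (- 1) * (c * h t + d * h' t))"
  have F: "F \<in> Lp_space p I" and B: "B \<in> Lp_space p I"
    unfolding F_def B_def using p f f' b b' by (auto intro: Lp_space_lincomb)
  have "w \<in> Lp_space p I"
    unfolding w_def h_def h'_def H_def
    using frac_conv_fixpoint(1) p f b f' b' F B by (intro Lp_space_lincomb) auto
  moreover have "AE y in M. w y = \<beta> y * w (Linv_pw y)"
    using frac_conv_fixpoint(2)[OF p f b] frac_conv_fixpoint(2)[OF p f' b'] frac_conv_fixpoint(2)[OF p F B]
    unfolding h_def[symmetric] h'_def[symmetric] H_def[symmetric]
  proof eventually_elim
    case (elim y)
    have "w y = (source F B y + \<beta> y * H (Linv_pw y))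
        - (c * (source f b y + \<beta> y * h (Linv_pw y)) + d * (source f' b' y + \<beta> y * h' (Linv_pw y)))"
      unfolding w_def elim[unfolded fcT_eq_source] by simp
    also have "\<dots> = \<beta> y * w (Linv_pw y)"
      unfolding w_def source_def F_def B_def by (simp add: algebra_simps)
    finally show ?case .
  qed
  ultimately have "AE y in M. w y = 0"
    by (rule Lp_homogeneous_solution_AE_zero[OF p])
  then show ?thesis
    unfolding F_def[symmetric] B_def[symmetric] h_def[symmetric] h'_def[symmetric] H_def[symmetric]
    by eventually_elim (simp add: w_def)
qed

lemma xs_0_less_N: "xs 0 < xs N"
  using xs_less N_pos by simp

lemma Lp_size_top_solution_le:
  assumes f: "f \<in> Lp_space \<infinity> I" and b: "b \<in> Lp_space \<infinity> I" and h: "h \<in> Lp_space \<infinity> I"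
    and eq: "AE y in M. h y = fcT N xs \<alpha> f b h y"
  shows "Lp_size \<infinity> I h \<le> 1 / (1 - \<Lambda>) * (Lp_size \<infinity> I f + Lp_size \<infinity> I b)"
proof -
  note size_f = Lp_size_top[OF xs_0_less_N f] and size_b = Lp_size_top[OF xs_0_less_N b]
    and size_h = Lp_size_top[OF xs_0_less_N h]
  have "AE y in M. \<bar>h y\<bar> \<le> (Lp_size \<infinity> I f + Lp_size \<infinity> I b) + \<Lambda> * Lp_size \<infinity> I h"
    using eq AE_abs_source_le[OF size_f(2) size_b(2)] size_h(2)
    unfolding fcT_eq_source by (rule solution_AE_bound)
  then have "Lp_size \<infinity> I h \<le> (Lp_size \<infinity> I f + Lp_size \<infinity> I b) + \<Lambda> * Lp_size \<infinity> I h"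
    by (rule size_h(3))
  then show ?thesis
    using \<Lambda>_less_1 by (simp add: field_simps)
qed

lemma powr_nn_integral_solution_le:
  assumes q: "0 < q" and f: "f \<in> Lp_space (ennreal q) I" and b: "b \<in> Lp_space (ennreal q) I"
    and h: "h \<in> Lp_space (ennreal q) I" and eq: "AE y in M. h y = fcT N xs \<alpha> f b h y"
  shows "enn2real (powr_nn_integral M q h)
    \<le> solution_const q * 2 powr q * (enn2real (powr_nn_integral M q f) + enn2real (powr_nn_integral M q b))"
proof -
  have m: "f \<in> borel_measurable M" "b \<in> borel_measurable M" "h \<in> borel_measurable M"
    and fin: "powr_nn_integral M q f < \<infinity>" "powr_nn_integral M q b < \<infinity>" "powr_nn_integral M q h < \<infinity>"
    using f b h Lp_space_ennreal_iff[OF q] by blast+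
  have "powr_nn_integral M q h \<le> ennreal (solution_const q) * powr_nn_integral M q (source f b)"
    using eq unfolding fcT_eq_source
    by (rule solution_powr_nn_integral_le[OF q m(3) source_measurable[OF m(1,2)] fin(3)])
  also have "\<dots> \<le> ennreal (solution_const q) * (ennreal (2 powr q) * (powr_nn_integral M q f + powr_nn_integral M q b))"
    by (intro mult_left_mono powr_nn_integral_source_le[OF q m(1,2)]) auto
  also have "\<dots> = ennreal (solution_const q * 2 powr q) * (powr_nn_integral M q f + powr_nn_integral M q b)"
    using solution_const_pos[OF q] by (simp add: ennreal_mult mult.assoc)
  finally have "enn2real (powr_nn_integral M q h)
      \<le> enn2real (ennreal (solution_const q * 2 powr q) * (powr_nn_integral M q f + powr_nn_integral M q b))"
    using fin by (intro enn2real_mono) (auto simp: ennreal_mult_less_top)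
  then show ?thesis
    using fin solution_const_pos[OF q] by (simp add: enn2real_mult enn2real_plus)
qed

definition Lp_size_const :: "real \<Rightarrow> real" where
  "Lp_size_const q = (if 1 \<le> q then (solution_const q * 2 powr q) powr (1 / q) * 2 powr (1 / q)
    else solution_const q * 2 powr q)"

lemma Lp_size_solution_le:
  assumes q: "0 < q" and f: "f \<in> Lp_space (ennreal q) I" and b: "b \<in> Lp_space (ennreal q) I"
    and h: "h \<in> Lp_space (ennreal q) I" and eq: "AE y in M. h y = fcT N xs \<alpha> f b h y"
  shows "Lp_size (ennreal q) I h \<le> Lp_size_const q * (Lp_size (ennreal q) I f + Lp_size (ennreal q) I b)"
proof -
  define K where "K = solution_const q * 2 powr q"
  define Ph Pf Pb where "Ph = enn2real (powr_nn_integral M q h)"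
    and "Pf = enn2real (powr_nn_integral M q f)" and "Pb = enn2real (powr_nn_integral M q b)"
  have le: "Ph \<le> K * (Pf + Pb)"
    unfolding Ph_def Pf_def Pb_def K_def by (rule powr_nn_integral_solution_le[OF q f b h eq])
  have nonneg: "0 \<le> Ph" "0 \<le> Pf" "0 \<le> Pb" "0 < K"
    unfolding Ph_def Pf_def Pb_def K_def using solution_const_pos[OF q] by auto
  have sizes: "Lp_size (ennreal q) I g = (if 1 \<le> q then P powr (1 / q) else P)"
    if "g \<in> Lp_space (ennreal q) I" "P = enn2real (powr_nn_integral M q g)" for g P
    using that Lp_size_ennreal[OF q] Lp_space_ennreal_iff[OF q] by auto
  show ?thesis
  proof (cases "1 \<le> q")
    case True
    have "Ph powr (1 / q) \<le> (K * (Pf + Pb)) powr (1 / q)"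
      using le nonneg q by (intro powr_mono2) auto
    also have "\<dots> = K powr (1 / q) * (Pf + Pb) powr (1 / q)"
      by (rule powr_mult; use nonneg in auto)
    also have "\<dots> \<le> K powr (1 / q) * (2 powr (1 / q) * (Pf powr (1 / q) + Pb powr (1 / q)))"
      using nonneg q by (intro mult_left_mono powr_add_le_two_powr) auto
    finally show ?thesis
      using True sizes[OF h Ph_def] sizes[OF f Pf_def] sizes[OF b Pb_def]
      by (simp add: Lp_size_const_def K_def mult.assoc)
  next
    case False
    then show ?thesis
      using le sizes[OF h Ph_def] sizes[OF f Pf_def] sizes[OF b Pb_def]
      by (simp add: Lp_size_const_def K_def)
  qed
qed

lemma frac_conv_bounded:
  assumes p: "0 < p"
  obtains C where "\<And>f b. f \<in> Lp_space p I \<Longrightarrow> b \<in> Lp_space p I \<Longrightarrow>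
    Lp_size p I (frac_conv p N xs \<alpha> f b) \<le> C * (Lp_size p I f + Lp_size p I b)"
  using p
proof (cases rule: ennreal_pos_cases)
  case 1
  show ?thesis
  proof (rule that)
    fix f b
    assume "f \<in> Lp_space p I" "b \<in> Lp_space p I"
    with p show "Lp_size p I (frac_conv p N xs \<alpha> f b) \<le> 1 / (1 - \<Lambda>) * (Lp_size p I f + Lp_size p I b)"
      unfolding 1 using Lp_size_top_solution_le frac_conv_fixpoint by blast
  qed
next
  case (2 q)
  show ?thesis
  proof (rule that)
    fix f b
    assume "f \<in> Lp_space p I" "b \<in> Lp_space p I"
    with p show "Lp_size p I (frac_conv p N xs \<alpha> f b) \<le> Lp_size_const q * (Lp_size p I f + Lp_size p I b)"
      unfolding 2(1) using Lp_size_solution_le[OF \<open>0 < q\<close>] frac_conv_fixpoint by blast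
  qed
qed

end

theorem theorem3p3:
  fixes p :: ennreal and N :: nat and xs :: "nat \<Rightarrow> real" and \<alpha> :: "nat \<Rightarrow> real \<Rightarrow> real"
  assumes "0 < p"
    and "2 \<le> N"
    and "\<And>n. n < N \<Longrightarrow> xs n < xs (Suc n)"
    and "\<And>n. n \<in> {1..N} \<Longrightarrow> \<alpha> n \<in> borel_measurable (lebesgue_on (Ival N xs))"
    and "\<exists>\<Lambda><1. \<forall>n\<in>{1..N}. AE t in lebesgue_on (Ival N xs). \<bar>\<alpha> n t\<bar> \<le> \<Lambda>"
  shows "(\<forall>f\<in>Lp_space p (Ival N xs). \<forall>b\<in>Lp_space p (Ival N xs).
            \<forall>f'\<in>Lp_space p (Ival N xs). \<forall>b'\<in>Lp_space p (Ival N xs). \<forall>c d :: real.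
            AE y in lebesgue_on (Ival N xs).
              frac_conv p N xs \<alpha> (\<lambda>t. c * f t + d * f' t) (\<lambda>t. c * b t + d * b' t) y
              = c * frac_conv p N xs \<alpha> f b y + d * frac_conv p N xs \<alpha> f' b' y)
       \<and> (\<exists>C. \<forall>f\<in>Lp_space p (Ival N xs). \<forall>b\<in>Lp_space p (Ival N xs).
            frac_conv p N xs \<alpha> f b \<in> Lp_space p (Ival N xs) \<and>
            Lp_size p (Ival N xs) (frac_conv p N xs \<alpha> f b)
              \<le> C * (Lp_size p (Ival N xs) f + Lp_size p (Ival N xs) b))"
proof -
  obtain \<Lambda> where \<Lambda>: "\<Lambda> < 1" "\<And>n. n \<in> {1..N} \<Longrightarrow> AE t in lebesgue_on (Ival N xs). \<bar>\<alpha> n t\<bar> \<le> \<Lambda>"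
    using assms(5) by blast
  interpret fractal_convolution N xs \<alpha> "max \<Lambda> 0"
  proof
    show "AE t in lebesgue_on (Ival N xs). \<bar>\<alpha> n t\<bar> \<le> max \<Lambda> 0" if "n \<in> {1..N}" for n
      using \<Lambda>(2)[OF that] by eventually_elim simp
  qed (use assms(2-4) \<Lambda>(1) in auto)
  obtain C where C: "\<And>f b. f \<in> Lp_space p I \<Longrightarrow> b \<in> Lp_space p I \<Longrightarrow>
      Lp_size p I (frac_conv p N xs \<alpha> f b) \<le> C * (Lp_size p I f + Lp_size p I b)"
    using frac_conv_bounded[OF assms(1)] by blast
  show ?thesis
    using frac_conv_linear[OF assms(1)] frac_conv_fixpoint(1)[OF assms(1)] C by blast
qed

end
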